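(* Let $m,n\in\mathbb{N}$ with $m\ge2$, and $b_{n,i}(x)=\binom ni x^i(1-x)^{n-i}$ for $i=0,\dots,n$. Then \[ \sum_{i_1,\dots,i_m=0}^n\Bigl(\sum_{l=1}^m b_{n,i_1}(x_l)b_{n,i_2}(x_l)\cdots b_{n,i_m}(x_l)\;-\;m\,b_{n,i_1}(x_1)b_{n,i_2}(x_2)\cdots b_{n,i_m}(x_m)\Bigr)f\Bigl(\frac{i_1+\dots+i_m}{mn}\Bigr)\ge0 \] for every convex continuous function $f:[0,1]\to\mathbb{R}$ and all $x_1,\dots,x_m\in[0,1]$. *)

theory Defs
  imports "HOL-Analysis.Analysis"
begin

definition bern :: "nat \<Rightarrow> nat \<Rightarrow> real \<Rightarrow> real" where
  "bern n i x = real (n choose i) * x ^ i * (1 - x) ^ (n - i)"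

end

theory Submission imports Defs begin

text \<open>
  Let \<open>X\<^sub>1, \<dots>, X\<^sub>m\<close> be independent with \<open>X\<^sub>j ~ Bin(n, x\<^sub>j)\<close> and \<open>F k = f (k / (m n))\<close>.
  The sum in question is \<open>\<Sum>\<^sub>l E F(S\<^sub>l) - m E F(X\<^sub>1 + \<dots> + X\<^sub>m)\<close>, where \<open>S\<^sub>l ~ Bin(m n, x\<^sub>l)\<close>,
  and \<open>F\<close> is discretely convex. We prove \<open>m E F(\<Sum>\<^sub>j X\<^sub>j) \<le> \<Sum>\<^sub>l E F(S\<^sub>l)\<close> by induction on \<open>m\<close>:
  conditioning on one variable \<open>X\<^sub>k\<close> and applying the induction hypothesis to the others,
  then averaging over \<open>k\<close>, reduces the claim to the supermodularity
  \<open>\<Phi>(u,v) + \<Phi>(v,u) \<le> \<Phi>(u,u) + \<Phi>(v,v)\<close> of \<open>\<Phi>(u,v) = E F(Bin((m-1) n, u) + Bin(n, v))\<close>.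
  That holds because the increments of \<open>F\<close> increase, and the binomial mean of an increasing
  function increases with the success probability.
\<close>

lemma bern_nonneg: "u \<in> {0..1} \<Longrightarrow> bern n t u \<ge> 0"
  by (auto simp: bern_def)

lemma bern_eq_0: "n < t \<Longrightarrow> bern n t u = 0"
  by (simp add: bern_def)

lemma bern_Suc_0: "bern (Suc n) 0 u = (1 - u) * bern n 0 u"
  by (simp add: bern_def)

lemma bern_Suc_Suc: "bern (Suc n) (Suc s) u = (1 - u) * bern n (Suc s) u + u * bern n s u"
proof (cases "s < n")
  case True
  then obtain d where "n = s + Suc d" by (metis add_Suc_right less_natE)
  then show ?thesis by (simp add: bern_def field_simps)
next
  case False
  then show ?thesis by (cases "s = n") (auto simp: bern_def binomial_eq_0)
qed

definition bern_mean :: "nat \<Rightarrow> real \<Rightarrow> (nat \<Rightarrow> real) \<Rightarrow> real" where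
  "bern_mean n u K = (\<Sum>t\<le>n. bern n t u * K t)"

lemma bern_mean_0 [simp]: "bern_mean 0 u K = K 0"
  by (simp add: bern_mean_def bern_def)

lemma bern_mean_Suc: "bern_mean (Suc n) u K = bern_mean n u (\<lambda>t. (1 - u) * K t + u * K (Suc t))"
proof -
  have "bern_mean (Suc n) u K
      = bern (Suc n) 0 u * K 0 + (\<Sum>s\<le>n. bern (Suc n) (Suc s) u * K (Suc s))"
    unfolding bern_mean_def by (subst sum.atMost_Suc_shift) simp
  also have "\<dots> = (1 - u) * (bern n 0 u * K 0 + (\<Sum>s\<le>n. bern n (Suc s) u * K (Suc s)))
                  + u * (\<Sum>s\<le>n. bern n s u * K (Suc s))"
    by (simp add: bern_Suc_0 bern_Suc_Suc algebra_simps sum.distrib sum_subtractf sum_distrib_left)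
  also have "bern n 0 u * K 0 + (\<Sum>s\<le>n. bern n (Suc s) u * K (Suc s)) = bern_mean n u K"
    by (subst sum.atMost_Suc_shift[symmetric]) (simp add: bern_mean_def bern_eq_0)
  finally show ?thesis
    by (simp add: bern_mean_def ring_distribs sum.distrib sum_distrib_left mult.left_commute)
qed

lemma bern_mean_mono:
  "u \<in> {0..1} \<Longrightarrow> (\<And>t. K t \<le> L t) \<Longrightarrow> bern_mean n u K \<le> bern_mean n u L"
  unfolding bern_mean_def by (intro sum_mono mult_left_mono) (auto simp: bern_nonneg)

lemma bern_mean_diff: "bern_mean n u (\<lambda>t. K t - L t) = bern_mean n u K - bern_mean n u L"
  unfolding bern_mean_def by (simp add: algebra_simps sum_subtractf)

lemma bern_mean_cmult: "bern_mean n u (\<lambda>t. c * K t) = c * bern_mean n u K"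
  unfolding bern_mean_def by (simp add: algebra_simps sum_distrib_left)

lemma bern_mean_sum: "bern_mean n u (\<lambda>t. \<Sum>l\<in>L. K l t) = (\<Sum>l\<in>L. bern_mean n u (K l))"
  unfolding bern_mean_def by (simp add: sum_distrib_left sum.swap[of _ _ L])

text \<open>By \<open>bern_mean_Suc\<close>, one more trial averages \<open>K\<close> into another increasing function,
  and the averaging weight \<open>u\<close> goes to the larger value \<open>K (Suc t)\<close>.\<close>

lemma bern_mean_mono_param:
  assumes "u \<in> {0..1}" "v \<in> {0..1}" "u \<le> v" "mono K"
  shows "bern_mean n u K \<le> bern_mean n v K"
  using assms(4)
proof (induction n arbitrary: K)
  case 0
  then show ?case by simp
next
  case (Suc n)
  let ?K = "\<lambda>w t. (1 - w) * K t + w * K (Suc t)"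
  have step: "K t \<le> K (Suc t)" for t
    using Suc.prems by (simp add: mono_iff_le_Suc)
  have "mono (?K u)"
    unfolding mono_iff_le_Suc using assms(1) step by (auto intro!: add_mono mult_left_mono)
  then have "bern_mean n u (?K u) \<le> bern_mean n v (?K u)"
    by (rule Suc.IH)
  also have "\<dots> \<le> bern_mean n v (?K v)"
  proof (rule bern_mean_mono[OF assms(2)])
    fix t
    have "(v - u) * K t \<le> (v - u) * K (Suc t)"
      using assms(3) step by (intro mult_left_mono) auto
    then show "?K u t \<le> ?K v t" by (simp add: algebra_simps)
  qed
  finally show ?case by (simp add: bern_mean_Suc)
qed

text \<open>\<open>iter_bern_mean n k u G = E G(X\<^sub>1 + \<dots> + X\<^sub>k)\<close> for i.i.d. \<open>X\<^sub>i ~ Bin(n, u)\<close>.\<close>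

fun iter_bern_mean :: "nat \<Rightarrow> nat \<Rightarrow> real \<Rightarrow> (nat \<Rightarrow> real) \<Rightarrow> real" where
  "iter_bern_mean n 0 u G = G 0"
| "iter_bern_mean n (Suc k) u G = bern_mean n u (\<lambda>t. iter_bern_mean n k u (\<lambda>s. G (s + t)))"

lemma iter_bern_mean_mono:
  "u \<in> {0..1} \<Longrightarrow> (\<And>s. G s \<le> H s) \<Longrightarrow> iter_bern_mean n k u G \<le> iter_bern_mean n k u H"
  by (induction k arbitrary: G H) (auto intro!: bern_mean_mono)

lemma iter_bern_mean_diff:
  "iter_bern_mean n k u (\<lambda>s. G s - H s) = iter_bern_mean n k u G - iter_bern_mean n k u H"
  by (induction k arbitrary: G H) (auto simp: bern_mean_diff)

lemma iter_bern_mean_mono_param: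
  assumes "u \<in> {0..1}" "v \<in> {0..1}" "u \<le> v" "mono G"
  shows "iter_bern_mean n k u G \<le> iter_bern_mean n k v G"
  using assms(4)
proof (induction k arbitrary: G)
  case 0
  then show ?case by simp
next
  case (Suc k)
  have shift_mono: "mono (\<lambda>s. G (s + t))" for t
    using Suc.prems by (simp add: mono_def)
  have "bern_mean n u (\<lambda>t. iter_bern_mean n k u (\<lambda>s. G (s + t)))
      \<le> bern_mean n u (\<lambda>t. iter_bern_mean n k v (\<lambda>s. G (s + t)))"
    using assms(1) shift_mono by (intro bern_mean_mono Suc.IH)
  also have "\<dots> \<le> bern_mean n v (\<lambda>t. iter_bern_mean n k v (\<lambda>s. G (s + t)))"
  proof (rule bern_mean_mono_param[OF assms(1-3)])
    show "mono (\<lambda>t. iter_bern_mean n k v (\<lambda>s. G (s + t)))"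
      unfolding mono_iff_le_Suc using assms(2)
      by (intro allI iter_bern_mean_mono monoD[OF Suc.prems]) simp_all
  qed
  finally show ?case by simp
qed

text \<open>\<open>indep_bern_mean n A y G = E G(\<Sum>j\<in>A. X j)\<close> for independent \<open>X j ~ Bin(n, y j)\<close>.\<close>

definition indep_bern_mean :: "nat \<Rightarrow> 'a set \<Rightarrow> ('a \<Rightarrow> real) \<Rightarrow> (nat \<Rightarrow> real) \<Rightarrow> real" where
  "indep_bern_mean n A y G =
     (\<Sum>i\<in>PiE A (\<lambda>_. {0..n}). (\<Prod>j\<in>A. bern n (i j) (y j)) * G (\<Sum>j\<in>A. i j))"

lemma indep_bern_mean_empty [simp]: "indep_bern_mean n {} y G = G 0"
  by (simp add: indep_bern_mean_def)

lemma indep_bern_mean_insert: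
  assumes "finite A" "a \<notin> A"
  shows "indep_bern_mean n (insert a A) y G
           = bern_mean n (y a) (\<lambda>t. indep_bern_mean n A y (\<lambda>s. G (s + t)))"
proof -
  let ?upd = "\<lambda>p :: nat \<times> ('a \<Rightarrow> nat). (snd p)(a := fst p)"
  have "indep_bern_mean n (insert a A) y G = (\<Sum>p\<in>{0..n} \<times> PiE A (\<lambda>_. {0..n}).
     (\<Prod>j\<in>insert a A. bern n (?upd p j) (y j)) * G (\<Sum>j\<in>insert a A. ?upd p j))"
    unfolding indep_bern_mean_def PiE_insert_eq
    by (subst sum.reindex[OF inj_combinator[OF assms(2)]]) (simp add: case_prod_beta)
  also have "\<dots> = (\<Sum>p\<in>{0..n} \<times> PiE A (\<lambda>_. {0..n}).
     bern n (fst p) (y a) * ((\<Prod>j\<in>A. bern n (snd p j) (y j)) * G ((\<Sum>j\<in>A. snd p j) + fst p)))"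
  proof (rule sum.cong[OF refl])
    fix p
    have "(\<Prod>j\<in>A. bern n (?upd p j) (y j)) = (\<Prod>j\<in>A. bern n (snd p j) (y j))"
      "(\<Sum>j\<in>A. ?upd p j) = (\<Sum>j\<in>A. snd p j)"
      using assms(2) by (auto intro!: prod.cong sum.cong)
    then show "(\<Prod>j\<in>insert a A. bern n (?upd p j) (y j)) * G (\<Sum>j\<in>insert a A. ?upd p j) =
      bern n (fst p) (y a) * ((\<Prod>j\<in>A. bern n (snd p j) (y j)) * G ((\<Sum>j\<in>A. snd p j) + fst p))"
      using assms by (simp add: add.commute)
  qed
  also have "\<dots> = bern_mean n (y a) (\<lambda>t. indep_bern_mean n A y (\<lambda>s. G (s + t)))"
    unfolding indep_bern_mean_def bern_mean_def sum_distrib_left sum.cartesian_product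
    by (simp add: case_prod_beta atLeast0AtMost)
  finally show ?thesis .
qed

lemma indep_bern_mean_const:
  "finite A \<Longrightarrow> indep_bern_mean n A (\<lambda>_. u) G = iter_bern_mean n (card A) u G"
  by (induction A arbitrary: G rule: finite_induct) (simp_all add: indep_bern_mean_insert)

lemma indep_bern_mean_cong:
  "(\<And>j. j \<in> A \<Longrightarrow> y j = y' j) \<Longrightarrow> indep_bern_mean n A y G = indep_bern_mean n A y' G"
  unfolding indep_bern_mean_def by (intro sum.cong refl arg_cong2[where f="(*)"] prod.cong) auto

definition discrete_convex :: "(nat \<Rightarrow> real) \<Rightarrow> bool" where
  "discrete_convex F \<longleftrightarrow> mono (\<lambda>k. F (Suc k) - F k)"

lemma discrete_convex_shift: "discrete_convex F \<Longrightarrow> discrete_convex (\<lambda>s. F (s + t))"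
  by (simp add: discrete_convex_def mono_def)

text \<open>\<open>mixed_bern_mean n m F u v = E F(Y + Z)\<close> for independent \<open>Y ~ Bin(m n, u)\<close>, \<open>Z ~ Bin(n, v)\<close>.\<close>

definition mixed_bern_mean :: "nat \<Rightarrow> nat \<Rightarrow> (nat \<Rightarrow> real) \<Rightarrow> real \<Rightarrow> real \<Rightarrow> real" where
  "mixed_bern_mean n m F u v = bern_mean n v (\<lambda>t. iter_bern_mean n m u (\<lambda>s. F (s + t)))"

lemma mixed_bern_mean_supermodular:
  assumes "u \<in> {0..1}" "v \<in> {0..1}" "discrete_convex F"
  shows "mixed_bern_mean n m F u v + mixed_bern_mean n m F v u
           \<le> mixed_bern_mean n m F u u + mixed_bern_mean n m F v v"
proof -
  have ordered: "mixed_bern_mean n m F a b + mixed_bern_mean n m F b a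
                   \<le> mixed_bern_mean n m F a a + mixed_bern_mean n m F b b"
    if ab: "a \<in> {0..1}" "b \<in> {0..1}" "a \<le> b" for a b
  proof -
    define D where
      "D t = iter_bern_mean n m b (\<lambda>s. F (s + t)) - iter_bern_mean n m a (\<lambda>s. F (s + t))" for t
    have "mono D"
      unfolding mono_iff_le_Suc
    proof
      fix t
      have "mono (\<lambda>s. F (s + Suc t) - F (s + t))"
        using assms(3) by (simp add: discrete_convex_def mono_def)
      then have "iter_bern_mean n m a (\<lambda>s. F (s + Suc t) - F (s + t))
                 \<le> iter_bern_mean n m b (\<lambda>s. F (s + Suc t) - F (s + t))"
        using ab by (intro iter_bern_mean_mono_param)
      then show "D t \<le> D (Suc t)"
        unfolding D_def iter_bern_mean_diff by simp
    qed
    then have "bern_mean n a D \<le> bern_mean n b D"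
      using ab by (intro bern_mean_mono_param)
    then show ?thesis
      unfolding D_def bern_mean_diff mixed_bern_mean_def by simp
  qed
  show ?thesis
    using ordered[of u v] ordered[of v u] assms by (cases "u \<le> v") simp_all
qed

lemma sum_offdiag_swap:
  assumes "finite A"
  shows "(\<Sum>k\<in>A. \<Sum>l\<in>A-{k}. g k l) = (\<Sum>k\<in>A. \<Sum>l\<in>A-{k}. g l k)"
proof -
  have "A - {k} = {l\<in>A. k \<noteq> l}" "A - {k} = {l\<in>A. l \<noteq> k}" for k
    by auto
  then show ?thesis
    using sum.swap_restrict[OF assms assms, of g "\<lambda>k l. k \<noteq> l"] by simp
qed

lemma sum_offdiag_le_of_supermodular:
  fixes g :: "'a \<Rightarrow> 'a \<Rightarrow> real"
  assumes "finite A" "\<And>k l. k \<in> A \<Longrightarrow> l \<in> A \<Longrightarrow> g k l + g l k \<le> g k k + g l l"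
  shows "(\<Sum>k\<in>A. \<Sum>l\<in>A-{k}. g l k) \<le> real (card A - 1) * (\<Sum>l\<in>A. g l l)"
proof -
  let ?S = "\<Sum>k\<in>A. \<Sum>l\<in>A-{k}. g l k"
  have "?S + ?S = (\<Sum>k\<in>A. \<Sum>l\<in>A-{k}. g l k + g k l)"
    by (subst (2) sum_offdiag_swap[OF assms(1)]) (simp add: sum.distrib)
  also have "\<dots> \<le> (\<Sum>k\<in>A. \<Sum>l\<in>A-{k}. g k k + g l l)"
    using assms(2) by (intro sum_mono) (auto simp: add.commute)
  also have "\<dots> = (\<Sum>k\<in>A. \<Sum>l\<in>A-{k}. g k k) + (\<Sum>k\<in>A. \<Sum>l\<in>A-{k}. g k k)"
    by (subst (3) sum_offdiag_swap[OF assms(1)]) (simp add: sum.distrib)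
  also have "(\<Sum>k\<in>A. \<Sum>l\<in>A-{k}. g k k) = real (card A - 1) * (\<Sum>l\<in>A. g l l)"
    using assms(1) by (simp add: sum_distrib_left card_Diff_singleton_if)
  finally show ?thesis by linarith
qed

lemma card_mult_indep_bern_mean_le:
  assumes "finite A" "\<forall>j\<in>A. y j \<in> {0..1}" "discrete_convex F"
  shows "real (card A) * indep_bern_mean n A y F \<le> (\<Sum>l\<in>A. indep_bern_mean n A (\<lambda>_. y l) F)"
  using assms
proof (induction "card A" arbitrary: A F)
  case 0
  then show ?case by simp
next
  case (Suc m)
  have cardA: "card A = Suc m"
    using Suc.hyps(2) by simp
  let ?\<Phi> = "mixed_bern_mean n m F"
  show ?case
  proof (cases "m = 0")
    case True
    then have "card A = 1"
      using cardA by simp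
    then obtain a where A: "A = {a}"
      by (rule card_1_singletonE)
    have "indep_bern_mean n A y F = indep_bern_mean n A (\<lambda>_. y a) F"
      by (rule indep_bern_mean_cong) (simp add: A)
    then show ?thesis using A by simp
  next
    case False
    have cond_on_k: "real m * indep_bern_mean n A y F \<le> (\<Sum>l\<in>A-{k}. ?\<Phi> (y l) (y k))"
      if k: "k \<in> A" for k
    proof -
      have fin: "finite (A - {k})" and card: "card (A - {k}) = m"
        using Suc.prems(1) cardA k by auto
      have IH: "real m * indep_bern_mean n (A - {k}) y G
                  \<le> (\<Sum>l\<in>A-{k}. indep_bern_mean n (A - {k}) (\<lambda>_. y l) G)"
        if "discrete_convex G" for G
        using Suc.hyps(1)[of "A - {k}" G] fin card Suc.prems(2) that by simp
      have "real m * indep_bern_mean n A y F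
          = bern_mean n (y k) (\<lambda>t. real m * indep_bern_mean n (A - {k}) y (\<lambda>s. F (s + t)))"
        using k fin indep_bern_mean_insert[of "A - {k}" k]
        by (simp add: insert_absorb bern_mean_cmult)
      also have "\<dots> \<le> bern_mean n (y k)
                       (\<lambda>t. \<Sum>l\<in>A-{k}. indep_bern_mean n (A - {k}) (\<lambda>_. y l) (\<lambda>s. F (s + t)))"
        using k Suc.prems(2,3) by (intro bern_mean_mono IH discrete_convex_shift) auto
      also have "\<dots> = (\<Sum>l\<in>A-{k}. ?\<Phi> (y l) (y k))"
        using fin card by (simp add: bern_mean_sum indep_bern_mean_const mixed_bern_mean_def)
      finally show ?thesis .
    qed
    have "(\<Sum>k\<in>A. real m * indep_bern_mean n A y F) \<le> (\<Sum>k\<in>A. \<Sum>l\<in>A-{k}. ?\<Phi> (y l) (y k))"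
      by (rule sum_mono) (rule cond_on_k)
    then have "real (Suc m) * (real m * indep_bern_mean n A y F)
                 \<le> (\<Sum>k\<in>A. \<Sum>l\<in>A-{k}. ?\<Phi> (y l) (y k))"
      using cardA by simp
    also have "\<dots> \<le> real m * (\<Sum>l\<in>A. ?\<Phi> (y l) (y l))"
    proof -
      have "?\<Phi> (y k) (y l) + ?\<Phi> (y l) (y k) \<le> ?\<Phi> (y k) (y k) + ?\<Phi> (y l) (y l)"
        if "k \<in> A" "l \<in> A" for k l
        using that Suc.prems(2,3) by (intro mixed_bern_mean_supermodular) auto
      then show ?thesis
        using sum_offdiag_le_of_supermodular[OF Suc.prems(1), of "\<lambda>l k. ?\<Phi> (y l) (y k)"]
          cardA by simp
    qed
    also have "(\<Sum>l\<in>A. ?\<Phi> (y l) (y l)) = (\<Sum>l\<in>A. indep_bern_mean n A (\<lambda>_. y l) F)"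
      using cardA Suc.prems(1) by (simp add: indep_bern_mean_const mixed_bern_mean_def)
    finally show ?thesis
      using False cardA by (simp add: mult.left_commute[of "real m"])
  qed
qed

lemma convex_on_discrete_convex_extension:
  assumes "convex_on {0..1} f"
  obtains F where "discrete_convex F" "\<And>k. k \<le> N \<Longrightarrow> F k = f (real k / real N)"
proof (cases "N = 0")
  case True
  then show ?thesis
    by (intro that[of "\<lambda>_. f 0"]) (simp_all add: discrete_convex_def mono_def)
next
  case nonzero: False
  define F where "F k = (if k \<le> N then f (real k / real N)
                         else f 1 + real (k - N) * (f 1 - f (real (N - 1) / real N)))" for k
  have "F (Suc k) - F k \<le> F (Suc (Suc k)) - F (Suc k)" for k
  proof (cases "Suc (Suc k) \<le> N")
    case True
    have "f ((1 - 1/2) *\<^sub>R (real k / real N) + (1/2) *\<^sub>R (real (Suc (Suc k)) / real N))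
        \<le> (1 - 1/2) * f (real k / real N) + (1/2) * f (real (Suc (Suc k)) / real N)"
      using True nonzero by (intro convex_onD[OF assms]) (auto simp: field_simps)
    moreover have "(1 - 1/2) *\<^sub>R (real k / real N) + (1/2) *\<^sub>R (real (Suc (Suc k)) / real N)
                     = real (Suc k) / real N"
      using nonzero by (simp add: field_simps)
    ultimately show ?thesis
      using True by (simp add: F_def)
  next
    case beyond: False
    show ?thesis
    proof (cases "Suc k = N")
      case True
      then show ?thesis by (auto simp: F_def)
    next
      case False
      with beyond have "N \<le> k" by simp
      then show ?thesis using nonzero by (simp add: F_def Suc_diff_le algebra_simps)
    qed
  qed
  then show ?thesis
    by (intro that[of F]) (simp_all add: F_def discrete_convex_def mono_iff_le_Suc)
qed

theorem theorem4:
  fixes m n :: nat and f :: "real \<Rightarrow> real" and x :: "nat \<Rightarrow> real"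
  assumes "m \<ge> 2"
    and "convex_on {0..1} f"
    and "continuous_on {0..1} f"
    and "\<And>l. l \<in> {1..m} \<Longrightarrow> x l \<in> {0..1}"
  shows "(\<Sum>i \<in> PiE {1..m} (\<lambda>_. {0..n}).
            ((\<Sum>l = 1..m. \<Prod>j = 1..m. bern n (i j) (x l))
             - real m * (\<Prod>j = 1..m. bern n (i j) (x j)))
            * f (real (\<Sum>j = 1..m. i j) / (real m * real n))) \<ge> 0"
proof -
  obtain F where F: "discrete_convex F" "\<And>k. k \<le> m * n \<Longrightarrow> F k = f (real k / real (m * n))"
    using convex_on_discrete_convex_extension[OF assms(2)] by blast
  have "(\<Sum>j = 1..m. i j) \<le> m * n" if "i \<in> PiE {1..m} (\<lambda>_. {0..n})" for i
    using that sum_mono[of "{1..m}" i "\<lambda>_. n"] by (auto simp: PiE_iff)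
  then have "(\<Sum>i \<in> PiE {1..m} (\<lambda>_. {0..n}).
               ((\<Sum>l = 1..m. \<Prod>j = 1..m. bern n (i j) (x l))
                - real m * (\<Prod>j = 1..m. bern n (i j) (x j)))
               * f (real (\<Sum>j = 1..m. i j) / (real m * real n)))
           = (\<Sum>i \<in> PiE {1..m} (\<lambda>_. {0..n}).
               ((\<Sum>l = 1..m. \<Prod>j = 1..m. bern n (i j) (x l))
                - real m * (\<Prod>j = 1..m. bern n (i j) (x j))) * F (\<Sum>j = 1..m. i j))"
    by (intro sum.cong) (simp_all add: F(2))
  also have "\<dots> = (\<Sum>l = 1..m. indep_bern_mean n {1..m} (\<lambda>_. x l) F)
                   - real m * indep_bern_mean n {1..m} x F"
    unfolding indep_bern_mean_def
    by (simp add: left_diff_distrib sum_subtractf sum_distrib_left sum_distrib_right mult.assoc)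
      (rule sum.swap)
  also have "\<dots> \<ge> 0"
    using card_mult_indep_bern_mean_le[of "{1..m}" x F n] F(1) assms(4) by simp
  finally show ?thesis .
qed

end
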